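(* On the cofree conilpotent cooperad $\mathcal{T}^c(M)$, the map $d_\psi H+Hd_\psi$ is zero in arity $1$ and is the identity in every arity $n\ge2$.
   Context: $M$ is the $\mathbb{S}$-module spanned by two arity-2 elements with trivial $\mathbb{S}_2$-action, $\mu$ of degree $1$ and $\beta$ of degree $2$. $\mathcal{T}^c(M)$ is spanned by rooted binary trees with leaves labeled $1,\dots,n$ and vertices decorated by $\mu$ or $\beta$ (arity 1 being spanned by the trivial tree); vertices are totally ordered via the planar (shuffle tree) representation, and Koszul signs refer to this order. Let $\psi:\mathcal{T}^c(M)\to M$ project onto $M$ and send $\mu\mapsto\beta$, $\beta\mapsto0$; its unique coderivation extension $d_\psi$ sends a decorated tree to the signed sum over its $\mu$-vertices of the tree with that $\mu$ replaced by $\beta$. For a binary tree $T$ and vertex $v$, let $m_v,n_v$ be the numbers of leaves above the two inputs of $v$, and $\omega(v)=m_vn_v$. Let $h:M\to M$ send $\beta\mapsto\mu$, $\mu\mapsto 0$. Define $H$ (degree $-1$) on a decorated tree with $n$ vertices as $\sum_v\frac{\omega(v)}{\binom{n+1}{2}}$ times the tree with $h$ applied to the decoration of $v$, with the Koszul sign. *)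

theory Defs
  imports Complex_Main
begin

text \<open>Generators of M: mu (degree 1) and beta (degree 2), both arity 2 with trivial S2-action.\<close>
datatype gen = Mu | Beta

fun gdeg :: "gen \<Rightarrow> nat" where
  "gdeg Mu = 1" | "gdeg Beta = 2"

text \<open>Since the S2-action is trivial,
  a basis element of the cofree cooperad is represented by its shuffle-tree (planar)
  representative: at each vertex the left subtree contains the smaller minimal leaf.\<close>
datatype dtree = Leaf nat | Node gen dtree dtree

fun leaves :: "dtree \<Rightarrow> nat list" where
  "leaves (Leaf i) = [i]"
| "leaves (Node a l r) = leaves l @ leaves r"

fun is_shuffle :: "dtree \<Rightarrow> bool" where
  "is_shuffle (Leaf i) = True"
| "is_shuffle (Node a l r) =
     (is_shuffle l \<and> is_shuffle r \<and> Min (set (leaves l)) < Min (set (leaves r)))"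

definition shuffle_tree :: "nat \<Rightarrow> dtree \<Rightarrow> bool" where
  "shuffle_tree n t \<longleftrightarrow> distinct (leaves t) \<and> set (leaves t) = {1..n} \<and> is_shuffle t"

text \<open>Vertices in their total order (preorder of the planar shuffle representative).\<close>
fun decs :: "dtree \<Rightarrow> gen list" where
  "decs (Leaf i) = []"
| "decs (Node a l r) = a # decs l @ decs r"

definition nverts :: "dtree \<Rightarrow> nat" where
  "nverts t = length (decs t)"

fun set_dec :: "dtree \<Rightarrow> nat \<Rightarrow> gen \<Rightarrow> dtree" where
  "set_dec (Leaf i) k b = Leaf i"
| "set_dec (Node a l r) k b =
     (if k = 0 then Node b l r
      else if k - 1 < nverts l then Node a (set_dec l (k - 1) b) r
      else Node a l (set_dec r (k - 1 - nverts l) b))"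

fun omega_at :: "dtree \<Rightarrow> nat \<Rightarrow> nat" where
  "omega_at (Leaf i) k = 0"
| "omega_at (Node a l r) k =
     (if k = 0 then length (leaves l) * length (leaves r)
      else if k - 1 < nverts l then omega_at l (k - 1)
      else omega_at r (k - 1 - nverts l))"

text \<open>Koszul sign for a degree +-1 map applied at the k-th vertex.\<close>
definition ksign :: "dtree \<Rightarrow> nat \<Rightarrow> real" where
  "ksign t k = (-1) ^ (\<Sum>j<k. gdeg (decs t ! j))"

definition Tc :: "nat \<Rightarrow> (dtree \<Rightarrow> real) set" where
  "Tc n = {x. finite {t. x t \<noteq> 0} \<and> (\<forall>t. x t \<noteq> 0 \<longrightarrow> shuffle_tree n t)}"

definition lin :: "(dtree \<Rightarrow> dtree \<Rightarrow> real) \<Rightarrow> (dtree \<Rightarrow> real) \<Rightarrow> dtree \<Rightarrow> real" where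
  "lin f x = (\<lambda>s. \<Sum>t\<in>{t. x t \<noteq> 0}. x t * f t s)"

definition dpsi_b :: "dtree \<Rightarrow> dtree \<Rightarrow> real" where
  "dpsi_b t = (\<lambda>s. \<Sum>k<nverts t.
      if decs t ! k = Mu \<and> s = set_dec t k Beta then ksign t k else 0)"

definition H_b :: "dtree \<Rightarrow> dtree \<Rightarrow> real" where
  "H_b t = (\<lambda>s. \<Sum>k<nverts t.
      if decs t ! k = Beta \<and> s = set_dec t k Mu
      then ksign t k * (real (omega_at t k) / real ((nverts t + 1) choose 2)) else 0)"

definition dpsi :: "(dtree \<Rightarrow> real) \<Rightarrow> dtree \<Rightarrow> real" where
  "dpsi = lin dpsi_b"

definition Hop :: "(dtree \<Rightarrow> real) \<Rightarrow> dtree \<Rightarrow> real" where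
  "Hop = lin H_b"

end

theory Submission
  imports Defs
begin

(* The operator d_psi H + H d_psi acts diagonally on basis trees.

   Fix a basis tree t with N vertices and decoration list D.  Expanding
   d_psi H t + H d_psi t gives a double sum over pairs of vertices (k, j):
   H switches a beta at k to mu, d_psi switches a mu at j to beta (or the
   other way round).  For k <> j the two orders give the same tree with
   opposite Koszul signs, because the degree of the vertex switched first
   differs by one; for k = j the term returns t with the square of a sign,
   i.e. with coefficient +1.  Hence
   (d_psi H + H d_psi) t = (sum_k omega(k) / binom(N+1, 2)) * t.  The
   weights omega(v) = m_v n_v count the pairs of leaves separated at v, so
   they sum to binom(N+1, 2), which is 0 for N = 0 (arity 1) and positive
   otherwise. *)

lemma sum_lessThan_add:
  fixes f :: "nat \<Rightarrow> 'a::comm_monoid_add"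
  shows "(\<Sum>k<a + b. f k) = (\<Sum>k<a. f k) + (\<Sum>k<b. f (a + k))"
  by (induction b) (simp_all add: add.assoc)

subsection \<open>Redecorating vertices\<close>

lemma decs_set_dec: "decs (set_dec t k b) = (decs t)[k := b]"
proof (induction t arbitrary: k)
  case (Node a l r)
  then show ?case
    by (cases k) (auto simp: nverts_def list_update_append)
qed simp

lemma nverts_set_dec [simp]: "nverts (set_dec t k b) = nverts t"
  by (simp add: nverts_def decs_set_dec)

lemma leaves_set_dec [simp]: "leaves (set_dec t k b) = leaves t"
  by (induction t arbitrary: k) auto

lemma omega_at_set_dec [simp]: "omega_at (set_dec t k b) j = omega_at t j"
  by (induction t arbitrary: k j) auto

fun shape :: "dtree \<Rightarrow> dtree" where
  "shape (Leaf i) = Leaf i"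
| "shape (Node a l r) = Node Mu (shape l) (shape r)"

lemma shape_set_dec [simp]: "shape (set_dec t k b) = shape t"
  by (induction t arbitrary: k) auto

lemma length_decs_shape: "length (decs (shape t)) = length (decs t)"
  by (induction t) auto

lemma dtree_eqI: "shape t = shape u \<Longrightarrow> decs t = decs u \<Longrightarrow> t = u"
proof (induction t arbitrary: u)
  case (Leaf i)
  then show ?case by (cases u) auto
next
  case (Node a l r)
  then obtain l' r' where u: "u = Node a l' r'" and sh: "shape l = shape l'" "shape r = shape r'"
    by (cases u) auto
  have "length (decs l) = length (decs l')"
    using sh(1) length_decs_shape by metis
  then have "decs l = decs l'" "decs r = decs r'"
    using Node.prems u by auto
  then show ?case using Node.IH sh u by simp
qed

lemma set_dec_twice: "set_dec (set_dec t k a) k b = set_dec t k b"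
  by (rule dtree_eqI) (simp_all add: decs_set_dec)

lemma set_dec_same: "set_dec t k (decs t ! k) = t"
  by (rule dtree_eqI) (simp_all add: decs_set_dec)

lemma set_dec_commute: "k \<noteq> j \<Longrightarrow> set_dec (set_dec t k a) j b = set_dec (set_dec t j b) k a"
  by (rule dtree_eqI) (simp_all add: decs_set_dec list_update_swap)

subsection \<open>Koszul signs\<close>

definition prefix_sign :: "gen list \<Rightarrow> nat \<Rightarrow> real" where
  "prefix_sign L k = (-1) ^ (\<Sum>i<k. gdeg (L ! i))"

lemma ksign_prefix_sign: "ksign t k = prefix_sign (decs t) k"
  by (simp add: ksign_def prefix_sign_def)

lemma prefix_sign_square: "prefix_sign L k * prefix_sign L k = 1"
  by (simp add: prefix_sign_def flip: power_add)

lemma prefix_sign_update_after: "k \<le> m \<Longrightarrow> prefix_sign (L[m := b]) k = prefix_sign L k"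
  unfolding prefix_sign_def by (intro arg_cong[where f = "\<lambda>e. (-1::real) ^ e"] sum.cong) auto

lemma prefix_sign_update_before:
  assumes "m < k" "m < length L"
    and "gdeg b + 1 = gdeg (L ! m) \<or> gdeg (L ! m) + 1 = gdeg b"
  shows "prefix_sign (L[m := b]) k = - prefix_sign L k"
proof -
  have m: "m \<in> {..<k}" using assms by simp
  have updated: "(\<Sum>i<k. gdeg (L[m := b] ! i)) = gdeg b + (\<Sum>i\<in>{..<k} - {m}. gdeg (L ! i))"
    using sum.remove[OF finite_lessThan m, of "\<lambda>i. gdeg (L[m := b] ! i)"] assms(2)
    by (simp add: sum.cong[OF refl, of _ "\<lambda>i. gdeg (L[m := b] ! i)" "\<lambda>i. gdeg (L ! i)"])
  have original: "(\<Sum>i<k. gdeg (L ! i)) = gdeg (L ! m) + (\<Sum>i\<in>{..<k} - {m}. gdeg (L ! i))"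
    using sum.remove[OF finite_lessThan m] by simp
  have "(-1::real) ^ gdeg b = - ((-1) ^ gdeg (L ! m))"
    using assms(3) by (metis mult_minus1 power_Suc Suc_eq_plus1 minus_minus)
  then show ?thesis
    unfolding prefix_sign_def updated original by (simp add: power_add)
qed

subsection \<open>The weights of H\<close>

lemma length_leaves: "length (leaves t) = Suc (nverts t)"
  by (induction t) (auto simp: nverts_def)

text \<open>Every pair of leaves is separated at exactly one vertex, so the weights
  m_v n_v add up to the number of pairs of leaves.\<close>

lemma sum_omega_at: "(\<Sum>k<nverts t. omega_at t k) = length (leaves t) choose 2"
proof -
  have "2 * (\<Sum>k<nverts t. omega_at t k) = length (leaves t) * (length (leaves t) - 1)"
  proof (induction t)
    case (Node a l r)
    have nv: "nverts (Node a l r) = Suc (nverts l + nverts r)"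
      by (simp add: nverts_def)
    have "(\<Sum>k<nverts (Node a l r). omega_at (Node a l r) k) =
        length (leaves l) * length (leaves r)
        + (\<Sum>k<nverts l. omega_at l k) + (\<Sum>k<nverts r. omega_at r k)"
      unfolding nv sum.lessThan_Suc_shift sum_lessThan_add by simp
    then show ?case
      using Node.IH length_leaves[of l] length_leaves[of r] by (simp add: algebra_simps)
  qed (simp add: nverts_def)
  then show ?thesis by (simp add: choose_two)
qed

definition hweight :: "dtree \<Rightarrow> nat \<Rightarrow> real" where
  "hweight t k = real (omega_at t k) / real ((nverts t + 1) choose 2)"

lemma hweight_set_dec [simp]: "hweight (set_dec t j b) k = hweight t k"
  by (simp add: hweight_def)

lemma sum_hweight:
  assumes "shuffle_tree n t"
  shows "(\<Sum>k<nverts t. hweight t k) = (if n = 1 then 0 else 1)"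
proof -
  have "length (leaves t) = n"
    using assms unfolding shuffle_tree_def by (metis card_atLeastAtMost diff_Suc_1 distinct_card)
  then have n: "nverts t + 1 = n" and n_pos: "n \<ge> 1"
    using length_leaves[of t] by simp_all
  have "(\<Sum>k<nverts t. hweight t k) = real (\<Sum>k<nverts t. omega_at t k) / real (n choose 2)"
    using n by (simp add: hweight_def sum_divide_distrib)
  also have "\<dots> = real (n choose 2) / real (n choose 2)"
    using sum_omega_at[of t] \<open>length (leaves t) = n\<close> by simp
  finally have "(\<Sum>k<nverts t. hweight t k) = real (n choose 2) / real (n choose 2)" .
  moreover have "n \<noteq> 1 \<Longrightarrow> n choose 2 > 0"
    using n_pos by (simp add: zero_less_binomial_iff)
  ultimately show ?thesis using n_pos by auto
qed

subsection \<open>Linear extensions\<close>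

lemma lin_superset:
  assumes "finite S" "{t. x t \<noteq> 0} \<subseteq> S"
  shows "lin f x s = (\<Sum>t\<in>S. x t * f t s)"
  unfolding lin_def using assms by (intro sum.mono_neutral_left) auto

lemma support_comb:
  fixes N :: nat
  shows "{u. (\<Sum>k<N. if P k \<and> u = a k then c k else 0) \<noteq> (0::real)} \<subseteq> a ` {..<N}"
proof
  fix u assume "u \<in> {u. (\<Sum>k<N. if P k \<and> u = a k then c k else 0) \<noteq> 0}"
  then have "(\<Sum>k<N. if P k \<and> u = a k then c k else 0) \<noteq> 0" by simp
  then obtain k where "k \<in> {..<N}" "(if P k \<and> u = a k then c k else 0) \<noteq> 0"
    by (rule sum.not_neutral_contains_not_neutral)
  then show "u \<in> a ` {..<N}" by (auto split: if_splits)
qed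

lemma finite_support_comb:
  fixes N :: nat
  shows "finite {u. (\<Sum>k<N. if P k \<and> u = a k then c k else 0) \<noteq> (0::real)}"
  using support_comb by (rule finite_subset) simp

lemma lin_comb:
  fixes N :: nat
  shows "lin g (\<lambda>u. \<Sum>k<N. if P k \<and> u = a k then c k else 0) s = (\<Sum>k<N. if P k then c k * g (a k) s else 0)"
proof -
  define A where "A = a ` {..<N}"
  have "lin g (\<lambda>u. \<Sum>k<N. if P k \<and> u = a k then c k else 0) s
      = (\<Sum>u\<in>A. (\<Sum>k<N. if P k \<and> u = a k then c k else 0) * g u s)"
    unfolding A_def by (intro lin_superset support_comb) simp
  also have "\<dots> = (\<Sum>k<N. \<Sum>u\<in>A. (if P k \<and> u = a k then c k else 0) * g u s)"
    by (simp only: sum_distrib_right sum.swap[of _ A])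
  also have "\<dots> = (\<Sum>k<N. \<Sum>u\<in>A. if u = a k then (if P k then c k * g u s else 0) else 0)"
    by (intro sum.cong refl) auto
  also have "\<dots> = (\<Sum>k<N. if P k then c k * g (a k) s else 0)"
    by (intro sum.cong refl) (simp add: sum.delta' A_def)
  finally show ?thesis .
qed

lemma lin_compose:
  assumes finX: "finite {t. x t \<noteq> 0}" and finF: "\<And>t. finite {u. f t u \<noteq> 0}"
  shows "lin g (lin f x) s = (\<Sum>t | x t \<noteq> 0. x t * lin g (f t) s)"
proof -
  define X where "X = {t. x t \<noteq> 0}"
  define S where "S = (\<Union>t\<in>X. {u. f t u \<noteq> 0})"
  have finS: "finite S" using finX finF unfolding S_def X_def by simp
  have lin_fx: "lin f x u = (\<Sum>t\<in>X. x t * f t u)" for u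
    unfolding lin_def X_def ..
  have "{u. lin f x u \<noteq> 0} \<subseteq> S"
    unfolding lin_fx S_def using sum.neutral[of X] by force
  then have "lin g (lin f x) s = (\<Sum>u\<in>S. (\<Sum>t\<in>X. x t * f t u) * g u s)"
    by (simp add: lin_superset[OF finS] lin_fx)
  also have "\<dots> = (\<Sum>t\<in>X. x t * (\<Sum>u\<in>S. f t u * g u s))"
    by (simp add: sum_distrib_right sum_distrib_left sum.swap[of _ S] mult.assoc)
  also have "\<dots> = (\<Sum>t\<in>X. x t * lin g (f t) s)"
  proof (intro sum.cong refl arg_cong2[where f = "(*)"])
    show "(\<Sum>u\<in>S. f t u * g u s) = lin g (f t) s" if "t \<in> X" for t
      using that by (intro lin_superset[symmetric] finS) (auto simp: S_def)
  qed
  finally show ?thesis unfolding X_def .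
qed

lemma dpsi_b_comb:
  "dpsi_b t = (\<lambda>u. \<Sum>k<nverts t. if decs t ! k = Mu \<and> u = set_dec t k Beta then ksign t k else 0)"
  unfolding dpsi_b_def ..

lemma H_b_comb:
  "H_b t = (\<lambda>u. \<Sum>k<nverts t. if decs t ! k = Beta \<and> u = set_dec t k Mu then ksign t k * hweight t k else 0)"
  unfolding H_b_def hweight_def ..

subsection \<open>The homotopy identity on a basis tree\<close>

lemma vertex_pair_contribution:
  fixes t s :: dtree and W :: "nat \<Rightarrow> real"
  defines "D \<equiv> decs t"
  assumes k: "k < length D" and j: "j < length D"
  shows "(if D ! k = Beta then prefix_sign D k * W k *
            (if D[k := Mu] ! j = Mu \<and> s = set_dec (set_dec t k Mu) j Beta
             then prefix_sign (D[k := Mu]) j else 0) else 0)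
       + (if D ! j = Mu then prefix_sign D j *
            (if D[j := Beta] ! k = Beta \<and> s = set_dec (set_dec t j Beta) k Mu
             then prefix_sign (D[j := Beta]) k * W k else 0) else 0)
       = (if k = j \<and> s = t then W k else 0)"
proof (cases "k = j")
  case True
  have restored: "set_dec (set_dec t k b) k (D ! k) = t" for b
    using set_dec_same[of t k] by (simp add: set_dec_twice D_def)
  have "D ! k = Beta \<or> D ! k = Mu" by (cases "D ! k") auto
  then show ?thesis
    using True k restored prefix_sign_update_after[of k k D] prefix_sign_square[of D k]
    by (auto simp: algebra_simps)
next
  case False
  have same: "set_dec (set_dec t k Mu) j Beta = set_dec (set_dec t j Beta) k Mu"
    using set_dec_commute[OF False] .
  show ?thesis
  proof (cases "D ! k = Beta \<and> D ! j = Mu \<and> s = set_dec (set_dec t j Beta) k Mu")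
    case switch: True
    consider "k < j" | "j < k" using False by linarith
    then show ?thesis
    proof cases
      case 1
      then have "prefix_sign (D[k := Mu]) j = - prefix_sign D j"
        "prefix_sign (D[j := Beta]) k = prefix_sign D k"
        using prefix_sign_update_before[of k j D Mu] prefix_sign_update_after k switch by simp_all
      then show ?thesis using switch False same by auto
    next
      case 2
      then have "prefix_sign (D[j := Beta]) k = - prefix_sign D k"
        "prefix_sign (D[k := Mu]) j = prefix_sign D j"
        using prefix_sign_update_before[of j k D Beta] prefix_sign_update_after j switch by simp_all
      then show ?thesis using switch False same by auto
    qed
  qed (use False same in auto)
qed

lemma homotopy_on_tree:
  "lin dpsi_b (H_b t) s + lin H_b (dpsi_b t) s = (if s = t then (\<Sum>k<nverts t. hweight t k) else 0)"
proof -
  define D where "D = decs t"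
  define N where "N = nverts t"
  have N: "N = length D" unfolding N_def D_def nverts_def by simp
  define A where "A = (\<lambda>k j. if D ! k = Beta then prefix_sign D k * hweight t k *
      (if D[k := Mu] ! j = Mu \<and> s = set_dec (set_dec t k Mu) j Beta
       then prefix_sign (D[k := Mu]) j else 0) else 0)"
  define B where "B = (\<lambda>k j. if D ! j = Mu then prefix_sign D j *
      (if D[j := Beta] ! k = Beta \<and> s = set_dec (set_dec t j Beta) k Mu
       then prefix_sign (D[j := Beta]) k * hweight t k else 0) else 0)"
  have dH: "lin dpsi_b (H_b t) s = (\<Sum>k<N. \<Sum>j<N. A k j)"
    unfolding H_b_comb lin_comb dpsi_b_comb ksign_prefix_sign decs_set_dec A_def D_def N_def
    by (intro sum.cong refl) (auto simp: sum_distrib_left)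
  have Hd: "lin H_b (dpsi_b t) s = (\<Sum>j<N. \<Sum>k<N. B k j)"
    unfolding dpsi_b_comb lin_comb H_b_comb ksign_prefix_sign decs_set_dec hweight_set_dec
      B_def D_def N_def
    by (intro sum.cong refl) (auto simp: sum_distrib_left)
  have "(\<Sum>k<N. \<Sum>j<N. A k j) + (\<Sum>j<N. \<Sum>k<N. B k j) = (\<Sum>k<N. \<Sum>j<N. A k j + B k j)"
    by (simp add: sum.swap[of B] sum.distrib)
  also have "\<dots> = (\<Sum>k<N. \<Sum>j<N. if k = j \<and> s = t then hweight t k else 0)"
    unfolding A_def B_def D_def
    by (intro sum.cong refl vertex_pair_contribution) (auto simp: N D_def)
  also have "\<dots> = (if s = t then (\<Sum>k<N. hweight t k) else 0)"
    by (auto intro: sum.cong)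
  finally show ?thesis unfolding dH Hd N_def .
qed

theorem lemma2p3:
  fixes n :: nat and x :: "dtree \<Rightarrow> real"
  assumes "n \<ge> 1" and "x \<in> Tc n"
  shows "(\<lambda>s. dpsi (Hop x) s + Hop (dpsi x) s) = (if n = 1 then (\<lambda>s. 0) else x)"
proof
  fix s
  define c :: real where "c = (if n = 1 then 0 else 1)"
  have finX: "finite {t. x t \<noteq> 0}" and trees: "\<And>t. x t \<noteq> 0 \<Longrightarrow> shuffle_tree n t"
    using assms(2) unfolding Tc_def by auto
  have fin_H: "finite {u. H_b t u \<noteq> 0}" for t
    unfolding H_b_comb by (rule finite_support_comb)
  have fin_D: "finite {u. dpsi_b t u \<noteq> 0}" for t
    unfolding dpsi_b_comb by (rule finite_support_comb)
  have "dpsi (Hop x) s + Hop (dpsi x) s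
      = (\<Sum>t | x t \<noteq> 0. x t * (lin dpsi_b (H_b t) s + lin H_b (dpsi_b t) s))"
    unfolding dpsi_def Hop_def lin_compose[OF finX fin_H] lin_compose[OF finX fin_D]
    by (simp add: sum.distrib distrib_left)
  also have "\<dots> = (\<Sum>t | x t \<noteq> 0. if t = s then c * x s else 0)"
    using sum_hweight[OF trees] by (intro sum.cong) (auto simp: homotopy_on_tree c_def)
  also have "\<dots> = c * x s"
    using finX by (simp add: sum.delta')
  finally show "dpsi (Hop x) s + Hop (dpsi x) s = (if n = 1 then (\<lambda>s. 0) else x) s"
    by (simp add: c_def)
qed

end
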